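(* Let $G$ be a connected graph of order $n$ and size $m$, with vertex degrees $d_1, \ldots, d_n$ and normalized Laplacian matrix $\mathcal{L}$. Then $G$ has $k$ distinct $\mathcal{L}$-eigenvalues, where $2 \le k \le n$, if and only if there are $k-1$ distinct non-zero real numbers $\mu_1, \ldots, \mu_{k-1}$ such that (i) $\mathcal{L} - \mu_i I$ is a singular matrix for every $1 \le i \le k-1$; and (ii) $\prod_{i=1}^{k-1}(\mathcal{L} - \mu_i I) = (-1)^{k-1}\frac{\prod_{i=1}^{k-1}\mu_i}{2m}\,\alpha\alpha^T$, where $\alpha^T = (\sqrt{d_1}, \sqrt{d_2}, \ldots, \sqrt{d_n})$. Moreover, in this case $\mu_1, \ldots, \mu_{k-1}, 0$ are exactly the $k$ distinct $\mathcal{L}$-eigenvalues of $G$.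
   Context: For a simple undirected graph with adjacency matrix $A$ and diagonal degree matrix $D$, the Laplacian is $L = D - A$ and the normalized Laplacian is $\mathcal{L} = D^{-1/2} L D^{-1/2}$; $\mathcal{L}$-eigenvalues are the eigenvalues of $\mathcal{L}$. $I$ is the identity matrix. *)

theory Defs
  imports "HOL-Analysis.Analysis"
begin

definition simple_graph :: "('n \<Rightarrow> 'n \<Rightarrow> bool) \<Rightarrow> bool" where
  "simple_graph E \<longleftrightarrow> (\<forall>u v. E u v \<longrightarrow> E v u) \<and> (\<forall>u. \<not> E u u)"

definition connected_graph :: "('n \<Rightarrow> 'n \<Rightarrow> bool) \<Rightarrow> bool" where
  "connected_graph E \<longleftrightarrow> (\<forall>u v. E\<^sup>*\<^sup>* u v)"

definition degree :: "('n::finite \<Rightarrow> 'n \<Rightarrow> bool) \<Rightarrow> 'n \<Rightarrow> nat" where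
  "degree E v = card {u. E v u}"

definition graph_size :: "('n::finite \<Rightarrow> 'n \<Rightarrow> bool) \<Rightarrow> nat" where
  "graph_size E = card {{u, v} | u v. E u v}"

definition adj_matrix :: "('n::finite \<Rightarrow> 'n \<Rightarrow> bool) \<Rightarrow> real^'n^'n" where
  "adj_matrix E = (\<chi> i j. if E i j then 1 else 0)"

definition deg_matrix :: "('n::finite \<Rightarrow> 'n \<Rightarrow> bool) \<Rightarrow> real^'n^'n" where
  "deg_matrix E = (\<chi> i j. if i = j then real (degree E i) else 0)"

text \<open>D^(-1/2) (for connected graphs with at least 2 vertices all degrees are positive).\<close>
definition deg_inv_sqrt_matrix :: "('n::finite \<Rightarrow> 'n \<Rightarrow> bool) \<Rightarrow> real^'n^'n" where
  "deg_inv_sqrt_matrix E = (\<chi> i j. if i = j then 1 / sqrt (real (degree E i)) else 0)"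

definition laplacian :: "('n::finite \<Rightarrow> 'n \<Rightarrow> bool) \<Rightarrow> real^'n^'n" where
  "laplacian E = deg_matrix E - adj_matrix E"

definition norm_laplacian :: "('n::finite \<Rightarrow> 'n \<Rightarrow> bool) \<Rightarrow> real^'n^'n" where
  "norm_laplacian E = deg_inv_sqrt_matrix E ** laplacian E ** deg_inv_sqrt_matrix E"

definition matrix_eigenvalues :: "real^'n^'n \<Rightarrow> real set" where
  "matrix_eigenvalues M = {c. \<exists>v. v \<noteq> 0 \<and> M *v v = c *\<^sub>R v}"

fun shifted_prod :: "real^'n^'n \<Rightarrow> (nat \<Rightarrow> real) \<Rightarrow> nat \<Rightarrow> real^'n^'n" where
  "shifted_prod M mu 0 = mat 1"
| "shifted_prod M mu (Suc j) = shifted_prod M mu j ** (M - mu (Suc j) *\<^sub>R mat 1)"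

definition sqrt_deg_vec :: "('n::finite \<Rightarrow> 'n \<Rightarrow> bool) \<Rightarrow> real^'n" where
  "sqrt_deg_vec E = (\<chi> i. sqrt (real (degree E i)))"

definition outer :: "real^'n \<Rightarrow> real^'n^'n" where
  "outer a = (\<chi> i j. a $ i * a $ j)"

end

theory Submission
  imports Defs
begin

(*
  The normalized Laplacian L is symmetric, L alpha = 0, and since G is connected its kernel is
  spanned by alpha.  If the eigenvalues of L are 0, mu_1, ..., mu_(k-1), then L P = 0 for
  P = (L - mu_1 I) ... (L - mu_(k-1) I): the symmetric matrix L P commutes with L and kills every
  eigenvector of L, while a nonzero such matrix would contain an eigenvector of L in its range.
  So the columns of P lie in span {alpha}, symmetry forces P = s alpha alpha^T, and s is read off
  from P alpha = (-mu_1) ... (-mu_(k-1)) alpha and alpha^T alpha = d_1 + ... + d_n = 2m.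
  Conversely, if P is a multiple of alpha alpha^T, an eigenvector for a nonzero eigenvalue lambda
  is orthogonal to alpha, so P kills it and (lambda - mu_1) ... (lambda - mu_(k-1)) = 0.
*)

lemma quadratic_nonpos_imp_linear_coeff_eq_0:
  fixes a b :: real
  assumes "\<And>t. a * t + b * t\<^sup>2 \<le> 0"
  shows "a = 0"
proof (rule ccontr)
  assume "a \<noteq> 0"
  define s where "s = 1 / (\<bar>b\<bar> + 1)"
  have "s > 0" and "\<bar>b\<bar> * s < 1" by (auto simp: s_def field_simps)
  moreover have "- \<bar>b\<bar> * s \<le> b * s"
    using \<open>s > 0\<close> by (intro mult_right_mono) auto
  ultimately have "a\<^sup>2 * s * (1 + b * s) > 0"
    using \<open>a \<noteq> 0\<close> by (intro mult_pos_pos) auto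
  also have "a\<^sup>2 * s * (1 + b * s) = a * (a * s) + b * (a * s)\<^sup>2"
    by (simp add: power2_eq_square algebra_simps)
  finally show False using assms[of "a * s"] by simp
qed

lemma symmetric_matrix_inner_commute:
  fixes A :: "real^'n^'n"
  assumes "transpose A = A"
  shows "(A *v x) \<bullet> y = x \<bullet> (A *v y)"
  by (metis assms dot_lmul_matrix transpose_matrix_vector)

text \<open>First variation at x0 in a direction y of W: the quadratic in t coming from x0 + t y
  has no linear term, i.e. L x0 - lam x0 is orthogonal to W.\<close>
lemma quadratic_form_maximizer_is_eigenvector:
  fixes L :: "real^'n^'n"
  assumes sym: "transpose L = L" and W: "subspace W"
    and x0: "x0 \<in> W" "L *v x0 \<in> W"
    and le: "\<And>z. z \<in> W \<Longrightarrow> z \<bullet> (L *v z) \<le> lam * (z \<bullet> z)"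
    and eq: "x0 \<bullet> (L *v x0) = lam * (x0 \<bullet> x0)"
  shows "L *v x0 = lam *\<^sub>R x0"
proof -
  define r where "r = L *v x0 - lam *\<^sub>R x0"
  have "y \<bullet> r = 0" if "y \<in> W" for y
  proof -
    have "2 * (y \<bullet> r) * t + (y \<bullet> (L *v y) - lam * (y \<bullet> y)) * t\<^sup>2 \<le> 0" for t
    proof -
      have "x0 + t *\<^sub>R y \<in> W"
        using x0 \<open>y \<in> W\<close> W by (simp add: subspace_add subspace_scale)
      from le[OF this] have "(x0 + t *\<^sub>R y) \<bullet> (L *v (x0 + t *\<^sub>R y))
          - lam * ((x0 + t *\<^sub>R y) \<bullet> (x0 + t *\<^sub>R y)) \<le> 0" by simp
      also have "(x0 + t *\<^sub>R y) \<bullet> (L *v (x0 + t *\<^sub>R y))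
          - lam * ((x0 + t *\<^sub>R y) \<bullet> (x0 + t *\<^sub>R y))
          = 2 * (y \<bullet> r) * t + (y \<bullet> (L *v y) - lam * (y \<bullet> y)) * t\<^sup>2"
        using eq symmetric_matrix_inner_commute[OF sym, of y x0]
        by (simp add: r_def algebra_simps inner_add_left inner_add_right inner_diff_right
            inner_commute power2_eq_square)
      finally show ?thesis .
    qed
    then have "2 * (y \<bullet> r) = 0" by (rule quadratic_nonpos_imp_linear_coeff_eq_0)
    then show ?thesis by simp
  qed
  moreover have "r \<in> W"
    using x0 W by (simp add: r_def subspace_diff subspace_scale)
  ultimately have "r \<bullet> r = 0" by blast
  then show ?thesis by (simp add: r_def)
qed

lemma symmetric_matrix_eigenvector_in_invariant_subspace:
  fixes L :: "real^'n^'n"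
  assumes sym: "transpose L = L" and W: "subspace W" and "W \<noteq> {0}"
    and invariant: "\<And>x. x \<in> W \<Longrightarrow> L *v x \<in> W"
  obtains x c where "x \<in> W" "x \<noteq> 0" "L *v x = c *\<^sub>R x"
proof -
  define f where "f x = x \<bullet> (L *v x)" for x
  define S where "S = W \<inter> sphere 0 1"
  have "compact S"
    unfolding S_def by (rule closed_Int_compact[OF closed_subspace[OF W] compact_sphere])
  obtain w where "w \<in> W" "w \<noteq> 0" using \<open>W \<noteq> {0}\<close> W subspace_0 by blast
  then have "w /\<^sub>R norm w \<in> S" using W by (simp add: S_def subspace_scale)
  moreover have "continuous_on S f"
    unfolding f_def by (intro continuous_intros linear_continuous_on matrix_vector_mul_linear)
  ultimately obtain x0 where "x0 \<in> S" and x0_max: "\<And>y. y \<in> S \<Longrightarrow> f y \<le> f x0"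
    using continuous_attains_sup[OF \<open>compact S\<close>] by blast
  then have "x0 \<in> W" "x0 \<bullet> x0 = 1" by (auto simp: S_def dot_square_norm)
  have "z \<bullet> (L *v z) \<le> f x0 * (z \<bullet> z)" if "z \<in> W" for z
  proof (cases "z = 0")
    case False
    then have "z /\<^sub>R norm z \<in> S" using \<open>z \<in> W\<close> W by (simp add: S_def subspace_scale)
    then have "f (z /\<^sub>R norm z) \<le> f x0" by (rule x0_max)
    then have "f z / (norm z)\<^sup>2 \<le> f x0"
      by (simp add: f_def matrix_vector_mult_scaleR power2_eq_square divide_inverse mult_ac)
    then show ?thesis
      using False by (simp add: f_def dot_square_norm[symmetric] divide_le_eq mult.commute)
  qed simp
  then have "L *v x0 = f x0 *\<^sub>R x0"
    using \<open>x0 \<in> W\<close> \<open>x0 \<bullet> x0 = 1\<close> invariant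
    by (intro quadratic_form_maximizer_is_eigenvector[OF sym W]) (auto simp: f_def)
  moreover have "x0 \<noteq> 0" using \<open>x0 \<bullet> x0 = 1\<close> by auto
  ultimately show ?thesis using that \<open>x0 \<in> W\<close> by blast
qed

lemma symmetric_matrix_eq_0_if_kills_eigenvectors:
  fixes L Q :: "real^'n^'n"
  assumes "transpose L = L" "transpose Q = Q" and comm: "Q ** L = L ** Q"
    and kills: "\<And>v c. L *v v = c *\<^sub>R v \<Longrightarrow> Q *v v = 0"
  shows "Q = 0"
proof (rule ccontr)
  assume "Q \<noteq> 0"
  define W where "W = range ((*v) Q)"
  have "subspace W"
    unfolding W_def by (rule linear_subspace_image[OF matrix_vector_mul_linear subspace_UNIV])
  moreover from \<open>Q \<noteq> 0\<close> have "W \<noteq> {0}"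
    unfolding W_def by (metis matrix_eq matrix_vector_mult_0 rangeI singletonD)
  moreover have "L *v x \<in> W" if "x \<in> W" for x
  proof -
    from that obtain u where "x = Q *v u" by (auto simp: W_def)
    then have "L *v x = Q *v (L *v u)" by (simp add: matrix_vector_mul_assoc comm)
    then show ?thesis by (simp add: W_def)
  qed
  ultimately obtain w c where "w \<in> W" "w \<noteq> 0" "L *v w = c *\<^sub>R w"
    using symmetric_matrix_eigenvector_in_invariant_subspace[OF \<open>transpose L = L\<close>] by metis
  then obtain u where "w = Q *v u" by (auto simp: W_def)
  then have "w \<bullet> w = u \<bullet> (Q *v w)"
    using symmetric_matrix_inner_commute[OF \<open>transpose Q = Q\<close>] by simp
  also have "\<dots> = 0" using kills[OF \<open>L *v w = c *\<^sub>R w\<close>] by simp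
  finally show False using \<open>w \<noteq> 0\<close> by simp
qed

lemma matrix_eigenvalues_iff_singular:
  "c \<in> matrix_eigenvalues M \<longleftrightarrow> \<not> invertible (M - c *\<^sub>R mat 1)"
proof -
  have "M *v v = c *\<^sub>R v \<longleftrightarrow> (M - c *\<^sub>R mat 1) *v v = 0" for v
    by (simp add: matrix_vector_mult_diff_rdistrib scaleR_matrix_vector_assoc[symmetric])
  moreover have "\<not> invertible A \<longleftrightarrow> (\<exists>v. v \<noteq> 0 \<and> A *v v = 0)" for A :: "real^'n^'n"
    by (metis invertible_def matrix_left_invertible_ker matrix_left_right_inverse)
  ultimately show ?thesis unfolding matrix_eigenvalues_def mem_Collect_eq by metis
qed

lemma matrix_diff_ldistrib: "(A :: 'a::ring_1^'n^'m) ** (B - C) = A ** B - A ** C"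
  by (simp add: vec_eq_iff matrix_matrix_mult_def algebra_simps sum_subtractf)

lemma matrix_diff_rdistrib: "((B :: 'a::ring_1^'n^'m) - C) ** A = B ** A - C ** A"
  by (simp add: vec_eq_iff matrix_matrix_mult_def algebra_simps sum_subtractf)

lemma shift_commute:
  fixes A M :: "real^'n^'n"
  assumes "A ** M = M ** A"
  shows "A ** (M - c *\<^sub>R mat 1) = (M - c *\<^sub>R mat 1) ** A"
  using assms
  by (simp add: matrix_diff_ldistrib matrix_diff_rdistrib matrix_scalar_ac
      scalar_matrix_assoc[symmetric])

lemma shifted_prod_commute:
  assumes "A ** M = M ** A"
  shows "A ** shifted_prod M mu j = shifted_prod M mu j ** A"
proof (induction j)
  case (Suc j)
  have "A ** shifted_prod M mu (Suc j) = shifted_prod M mu j ** (A ** (M - mu (Suc j) *\<^sub>R mat 1))"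
    by (simp add: Suc matrix_mul_assoc)
  also have "\<dots> = shifted_prod M mu (Suc j) ** A"
    by (simp add: shift_commute[OF assms] matrix_mul_assoc)
  finally show ?case .
qed simp

lemma transpose_shifted_prod:
  assumes "transpose M = M"
  shows "transpose (shifted_prod M mu j) = shifted_prod M mu j"
proof (induction j)
  case (Suc j)
  have "transpose (M - mu (Suc j) *\<^sub>R mat 1) = M - mu (Suc j) *\<^sub>R mat 1"
    using assms by (simp add: vec_eq_iff transpose_def mat_def)
  moreover have "(M - mu (Suc j) *\<^sub>R mat 1) ** M = M ** (M - mu (Suc j) *\<^sub>R mat 1)"
    by (rule shift_commute[symmetric]) simp
  ultimately show ?case
    by (simp add: matrix_transpose_mul Suc shifted_prod_commute)
qed simp

lemma shifted_prod_eigenvector: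
  assumes "M *v v = c *\<^sub>R v"
  shows "shifted_prod M mu j *v v = (\<Prod>i\<in>{1..j}. c - mu i) *\<^sub>R v"
proof (induction j)
  case (Suc j)
  have "(M - mu (Suc j) *\<^sub>R mat 1) *v v = (c - mu (Suc j)) *\<^sub>R v"
    using assms by (simp add: matrix_vector_mult_diff_rdistrib
        scaleR_matrix_vector_assoc[symmetric] algebra_simps)
  then show ?case
    by (simp add: matrix_vector_mul_assoc[symmetric] matrix_vector_mult_scaleR Suc
        prod.cl_ivl_Suc mult_ac)
qed simp

lemma mult_shifted_prod_eq_0:
  fixes L :: "real^'n^'n"
  assumes sym: "transpose L = L"
    and eigenvalues: "matrix_eigenvalues L \<subseteq> insert 0 (mu ` {1..K})"
  shows "L ** shifted_prod L mu K = 0"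
proof (rule symmetric_matrix_eq_0_if_kills_eigenvectors[OF sym])
  show "transpose (L ** shifted_prod L mu K) = L ** shifted_prod L mu K"
    by (simp add: matrix_transpose_mul sym transpose_shifted_prod shifted_prod_commute)
  show "(L ** shifted_prod L mu K) ** L = L ** (L ** shifted_prod L mu K)"
    by (metis matrix_mul_assoc shifted_prod_commute[OF refl])
next
  fix v c assume v: "L *v v = c *\<^sub>R v"
  show "(L ** shifted_prod L mu K) *v v = 0"
  proof (cases "v = 0")
    case False
    with v have "c = 0 \<or> (\<Prod>i\<in>{1..K}. c - mu i) = 0"
      using eigenvalues by (auto simp: matrix_eigenvalues_def)
    then show ?thesis
      by (auto simp: matrix_vector_mul_assoc[symmetric] shifted_prod_eigenvector[OF v]
          matrix_vector_mult_scaleR v)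
  qed simp
qed

lemma outer_mult_vec: "outer a *v v = (a \<bullet> v) *\<^sub>R a"
  by (simp add: vec_eq_iff matrix_vector_mult_def outer_def inner_vec_def
      sum_distrib_left mult_ac)

lemma symmetric_matrix_range_in_line_eq_outer:
  fixes P :: "real^'n^'n"
  assumes "transpose P = P" "a \<noteq> 0" and range: "\<And>x. \<exists>t. P *v x = t *\<^sub>R a"
  obtains s where "P = s *\<^sub>R outer a"
proof -
  obtain i0 where "a $ i0 \<noteq> 0" using \<open>a \<noteq> 0\<close> by (auto simp: vec_eq_iff)
  define t where "t j = (SOME t. P *v axis j 1 = t *\<^sub>R a)" for j
  have P_entry: "P $ i $ j = t j * a $ i" for i j
  proof -
    have "P *v axis j 1 = t j *\<^sub>R a" unfolding t_def by (rule someI_ex[OF range])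
    then show ?thesis
      by (simp add: vec_eq_iff matrix_vector_mult_def axis_def if_distrib if_distribR
          cong: if_cong)
  qed
  define s where "s = t i0 / a $ i0"
  have "t j = s * a $ j" for j
  proof -
    have "P $ i0 $ j = P $ j $ i0" using \<open>transpose P = P\<close> by (metis transpose_def vec_lambda_beta)
    then show ?thesis using \<open>a $ i0 \<noteq> 0\<close> by (simp add: s_def P_entry field_simps)
  qed
  then have "P = s *\<^sub>R outer a"
    by (simp add: vec_eq_iff P_entry outer_def mult_ac)
  then show ?thesis by (rule that)
qed

lemma shifted_prod_eq_outer_if_eigenvalues_subset:
  fixes L :: "real^'n^'n" and a :: "real^'n"
  assumes sym: "transpose L = L" and "a \<noteq> 0" and "L *v a = 0"
    and kernel: "\<And>x. L *v x = 0 \<Longrightarrow> \<exists>t. x = t *\<^sub>R a"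
    and "matrix_eigenvalues L \<subseteq> insert 0 (mu ` {1..K})"
  shows "shifted_prod L mu K = ((\<Prod>i\<in>{1..K}. - mu i) / (a \<bullet> a)) *\<^sub>R outer a"
proof -
  let ?P = "shifted_prod L mu K"
  have "L *v (?P *v x) = 0" for x
    by (simp add: matrix_vector_mul_assoc mult_shifted_prod_eq_0[OF assms(1,5)])
  then have "\<exists>t. ?P *v x = t *\<^sub>R a" for x using kernel by blast
  then obtain s where s: "?P = s *\<^sub>R outer a"
    using symmetric_matrix_range_in_line_eq_outer[OF transpose_shifted_prod[OF sym] \<open>a \<noteq> 0\<close>]
    by blast
  have "(\<Prod>i\<in>{1..K}. - mu i) *\<^sub>R a = ?P *v a"
    using shifted_prod_eigenvector[of L a 0] \<open>L *v a = 0\<close> by simp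
  also have "\<dots> = (s * (a \<bullet> a)) *\<^sub>R a"
    by (simp add: s scaleR_matrix_vector_assoc[symmetric] outer_mult_vec)
  finally have "s * (a \<bullet> a) = (\<Prod>i\<in>{1..K}. - mu i)"
    using \<open>a \<noteq> 0\<close> by (simp add: scaleR_cancel_right)
  then have "s = (\<Prod>i\<in>{1..K}. - mu i) / (a \<bullet> a)"
    using \<open>a \<noteq> 0\<close> by (simp add: field_simps)
  with s show ?thesis by simp
qed

lemma eigenvalues_eq_if_shifted_prod_eq_outer:
  fixes L :: "real^'n^'n" and a :: "real^'n"
  assumes sym: "transpose L = L" and "a \<noteq> 0" and "L *v a = 0"
    and singular: "\<forall>i\<in>{1..K}. \<not> invertible (L - mu i *\<^sub>R mat 1)"
    and prod: "shifted_prod L mu K = c *\<^sub>R outer a"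
  shows "matrix_eigenvalues L = insert 0 (mu ` {1..K})"
proof (intro equalityI subsetI)
  fix l assume "l \<in> matrix_eigenvalues L"
  then obtain v where v: "v \<noteq> 0" "L *v v = l *\<^sub>R v" by (auto simp: matrix_eigenvalues_def)
  show "l \<in> insert 0 (mu ` {1..K})"
  proof (cases "l = 0")
    case False
    have "l * (v \<bullet> a) = v \<bullet> (L *v a)"
      using v symmetric_matrix_inner_commute[OF sym, of v a] by simp
    then have "v \<bullet> a = 0" using \<open>L *v a = 0\<close> False by simp
    then have "shifted_prod L mu K *v v = 0"
      by (simp add: prod scaleR_matrix_vector_assoc[symmetric] outer_mult_vec inner_commute)
    then have "(\<Prod>i\<in>{1..K}. l - mu i) = 0"
      using shifted_prod_eigenvector[OF v(2)] v(1) by simp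
    then show ?thesis by auto
  qed simp
next
  fix l assume "l \<in> insert 0 (mu ` {1..K})"
  then show "l \<in> matrix_eigenvalues L"
    using singular \<open>a \<noteq> 0\<close> \<open>L *v a = 0\<close> matrix_eigenvalues_iff_singular
    by (auto simp: matrix_eigenvalues_def)
qed

lemma card_eigenvalues_iff_shifted_prod_eq_outer:
  fixes L :: "real^'n^'n" and a :: "real^'n"
  assumes sym: "transpose L = L" and "a \<noteq> 0" and "L *v a = 0"
    and kernel: "\<And>x. L *v x = 0 \<Longrightarrow> \<exists>t. x = t *\<^sub>R a"
    and "1 \<le> k"
  shows "(card (matrix_eigenvalues L) = k \<longleftrightarrow>
          (\<exists>mu :: nat \<Rightarrow> real.
             inj_on mu {1..k-1} \<and> (\<forall>i\<in>{1..k-1}. mu i \<noteq> 0) \<and>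
             (\<forall>i\<in>{1..k-1}. \<not> invertible (L - mu i *\<^sub>R mat 1)) \<and>
             shifted_prod L mu (k-1) =
               ((-1)^(k-1) * (\<Prod>i\<in>{1..k-1}. mu i) / (a \<bullet> a)) *\<^sub>R outer a))
       \<and> (\<forall>mu :: nat \<Rightarrow> real.
             inj_on mu {1..k-1} \<and> (\<forall>i\<in>{1..k-1}. mu i \<noteq> 0) \<and>
             (\<forall>i\<in>{1..k-1}. \<not> invertible (L - mu i *\<^sub>R mat 1)) \<and>
             shifted_prod L mu (k-1) =
               ((-1)^(k-1) * (\<Prod>i\<in>{1..k-1}. mu i) / (a \<bullet> a)) *\<^sub>R outer a
           \<longrightarrow> matrix_eigenvalues L = insert 0 (mu ` {1..k-1}))"
    (is "(?card \<longleftrightarrow> (\<exists>mu. ?char mu)) \<and> (\<forall>mu. ?char mu \<longrightarrow> ?eigenvalues mu)")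
proof -
  have characterised: "?eigenvalues mu" if "?char mu" for mu
    using that eigenvalues_eq_if_shifted_prod_eq_outer[OF sym \<open>a \<noteq> 0\<close> \<open>L *v a = 0\<close>] by blast
  moreover have "\<exists>mu. ?char mu" if ?card
  proof -
    have "finite (matrix_eigenvalues L)" using \<open>?card\<close> \<open>1 \<le> k\<close> by (intro card_ge_0_finite) simp
    moreover have "0 \<in> matrix_eigenvalues L"
      using \<open>a \<noteq> 0\<close> \<open>L *v a = 0\<close> by (auto simp: matrix_eigenvalues_def)
    ultimately have "card (matrix_eigenvalues L - {0}) = k - 1"
      and "finite (matrix_eigenvalues L - {0})" using \<open>?card\<close> by simp_all
    then obtain mu where mu: "bij_betw mu {1..k-1} (matrix_eigenvalues L - {0})"
      using ex_bij_betw_nat_finite_1 by metis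
    then have "inj_on mu {1..k-1}" and image: "mu ` {1..k-1} = matrix_eigenvalues L - {0}"
      by (simp_all add: bij_betw_def)
    then have "matrix_eigenvalues L \<subseteq> insert 0 (mu ` {1..k-1})" by blast
    from shifted_prod_eq_outer_if_eigenvalues_subset[OF assms(1-4) this]
    have "shifted_prod L mu (k-1) =
        ((-1)^(k-1) * (\<Prod>i\<in>{1..k-1}. mu i) / (a \<bullet> a)) *\<^sub>R outer a"
      by (simp add: prod_uminus)
    moreover have "\<forall>i\<in>{1..k-1}. mu i \<noteq> 0 \<and> \<not> invertible (L - mu i *\<^sub>R mat 1)"
      using image matrix_eigenvalues_iff_singular by blast
    ultimately show ?thesis using \<open>inj_on mu {1..k-1}\<close> by blast
  qed
  moreover have ?card if "?char mu" for mu
  proof -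
    have "0 \<notin> mu ` {1..k-1}" and "card (mu ` {1..k-1}) = k - 1"
      using that by (auto simp: card_image)
    then show ?thesis using characterised[OF that] \<open>1 \<le> k\<close> by simp
  qed
  ultimately show ?thesis by blast
qed

lemma degree_pos:
  fixes E :: "'n::finite \<Rightarrow> 'n \<Rightarrow> bool"
  assumes "connected_graph E" and "2 \<le> CARD('n)"
  shows "degree E i > 0"
proof -
  obtain j :: 'n where "j \<noteq> i"
    using assms(2) by (metis UNIV_I card_1_singletonE card_le_Suc0_iff_eq finite_class.finite_UNIV
        not_less_eq_eq numeral_2_eq_2)
  moreover have "E\<^sup>*\<^sup>* i j" using assms(1) by (simp add: connected_graph_def)
  ultimately obtain u where "E i u" by (metis converse_rtranclpE)
  then show ?thesis by (auto simp: degree_def card_gt_0_iff)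
qed

lemma norm_laplacian_entry:
  fixes E :: "'n::finite \<Rightarrow> 'n \<Rightarrow> bool"
  assumes "simple_graph E" and "\<And>i. degree E i > 0"
  shows "norm_laplacian E $ i $ j =
    (if i = j then 1 else 0) - (if E i j then 1 / (sqrt (degree E i) * sqrt (degree E j)) else 0)"
proof -
  have "norm_laplacian E $ i $ j = laplacian E $ i $ j / sqrt (degree E i) / sqrt (degree E j)"
    by (simp add: norm_laplacian_def matrix_matrix_mult_def deg_inv_sqrt_matrix_def
        if_distrib if_distribR cong: if_cong)
  moreover have "\<not> E i i" using assms(1) by (simp add: simple_graph_def)
  moreover have "sqrt (degree E i) > 0" using assms(2)[of i] by simp
  ultimately show ?thesis
    by (auto simp: laplacian_def deg_matrix_def adj_matrix_def divide_simps)
qed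

lemma norm_laplacian_symmetric:
  fixes E :: "'n::finite \<Rightarrow> 'n \<Rightarrow> bool"
  assumes "simple_graph E" and "\<And>i. degree E i > 0"
  shows "transpose (norm_laplacian E) = norm_laplacian E"
proof -
  have "E i j = E j i" for i j using assms(1) by (auto simp: simple_graph_def)
  then show ?thesis by (simp add: vec_eq_iff transpose_def norm_laplacian_entry[OF assms] mult.commute)
qed

lemma norm_laplacian_mult_vec:
  fixes E :: "'n::finite \<Rightarrow> 'n \<Rightarrow> bool"
  assumes "simple_graph E" and "\<And>i. degree E i > 0"
  shows "(norm_laplacian E *v x) $ i =
    x $ i - (\<Sum>j | E i j. x $ j / (sqrt (degree E i) * sqrt (degree E j)))"
proof -
  have "(norm_laplacian E *v x) $ i = (\<Sum>j\<in>UNIV. ((if i = j then 1 else 0) -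
     (if E i j then 1 / (sqrt (degree E i) * sqrt (degree E j)) else 0)) * x $ j)"
    by (simp add: matrix_vector_mult_def norm_laplacian_entry[OF assms])
  also have "\<dots> = (\<Sum>j\<in>UNIV. (if i = j then x $ j else 0)) -
     (\<Sum>j\<in>UNIV. (if E i j then x $ j / (sqrt (degree E i) * sqrt (degree E j)) else 0))"
    unfolding sum_subtractf[symmetric] by (intro sum.cong) (auto simp: left_diff_distrib)
  finally show ?thesis by (simp add: sum.If_cases)
qed

lemma norm_laplacian_sqrt_deg_vec:
  fixes E :: "'n::finite \<Rightarrow> 'n \<Rightarrow> bool"
  assumes "simple_graph E" and pos: "\<And>i. degree E i > 0"
  shows "norm_laplacian E *v sqrt_deg_vec E = 0"
proof -
  have "(\<Sum>j | E i j. sqrt (degree E j) / (sqrt (degree E i) * sqrt (degree E j)))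
        = sqrt (degree E i)" for i
  proof -
    have "(\<Sum>j | E i j. sqrt (degree E j) / (sqrt (degree E i) * sqrt (degree E j)))
        = (\<Sum>j | E i j. 1 / sqrt (degree E i))"
      using pos by (intro sum.cong) auto
    also have "\<dots> = degree E i / sqrt (degree E i)" by (simp add: degree_def)
    also have "\<dots> = sqrt (degree E i)" by (simp add: real_div_sqrt)
    finally show ?thesis .
  qed
  then show ?thesis by (simp add: vec_eq_iff norm_laplacian_mult_vec[OF assms] sqrt_deg_vec_def)
qed

text \<open>Writing x i = sqrt (d i) * y i, the equation says that each y i is the average of
  the values of y at the neighbours of i; so the maximum of y spreads along edges.\<close>
lemma norm_laplacian_kernel:
  fixes E :: "'n::finite \<Rightarrow> 'n \<Rightarrow> bool"
  assumes "simple_graph E" "connected_graph E" and pos: "\<And>i. degree E i > 0"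
    and x: "norm_laplacian E *v x = 0"
  shows "\<exists>t. x = t *\<^sub>R sqrt_deg_vec E"
proof -
  define s where "s i = sqrt (degree E i)" for i
  have s_pos: "s i > 0" for i using pos[of i] by (simp add: s_def)
  then have s_nonzero: "s i \<noteq> 0" for i by (metis less_irrefl)
  define y where "y j = x $ j / s j" for j
  have x_y: "x $ j = y j * s j" for j using s_pos[of j] by (simp add: y_def)
  have average: "(\<Sum>j | E i j. y i - y j) = 0" for i
  proof -
    have "x $ i = (\<Sum>j | E i j. x $ j / (s i * s j))"
      using x norm_laplacian_mult_vec[OF assms(1) pos, of x i] by (simp add: s_def)
    also have "\<dots> = (\<Sum>j | E i j. y j) / s i"
      by (simp add: x_y s_nonzero sum_divide_distrib)
    finally have "y i * (s i * s i) = (\<Sum>j | E i j. y j)"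
      using s_pos[of i] by (simp add: x_y field_simps)
    moreover have "s i * s i = card {j. E i j}" by (simp add: s_def degree_def)
    ultimately show ?thesis by (simp add: sum_subtractf mult.commute)
  qed
  define m where "m = Max (range y)"
  have y_le: "y j \<le> m" for j by (simp add: m_def)
  have "m \<in> range y" unfolding m_def by (rule Max_in) auto
  then obtain i0 where "y i0 = m" by auto
  have spread: "y v = m" if "y u = m" "E u v" for u v
  proof -
    have "\<forall>j\<in>{j. E u j}. y u - y j = 0"
      using average[of u] y_le that(1) by (subst sum_nonneg_eq_0_iff[symmetric]) auto
    then show ?thesis using that by auto
  qed
  have "y v = m" for v
  proof -
    have "E\<^sup>*\<^sup>* i0 v" using assms(2) by (simp add: connected_graph_def)
    then show ?thesis by (induction rule: rtranclp_induct) (use \<open>y i0 = m\<close> spread in auto)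
  qed
  then have "x = m *\<^sub>R sqrt_deg_vec E" by (simp add: vec_eq_iff x_y sqrt_deg_vec_def s_def)
  then show ?thesis by blast
qed

lemma sum_degree_eq_twice_graph_size:
  fixes E :: "'n::finite \<Rightarrow> 'n \<Rightarrow> bool"
  assumes "simple_graph E"
  shows "(\<Sum>i\<in>UNIV. degree E i) = 2 * graph_size E"
proof -
  define edges where "edges = {{u, v} | u v. E u v}"
  have "card {e \<in> edges. i \<in> e} = degree E i" for i
  proof -
    have "{e \<in> edges. i \<in> e} = (\<lambda>v. {i, v}) ` {v. E i v}"
      using assms by (auto simp: edges_def simple_graph_def insert_commute)
    moreover have "inj_on (\<lambda>v. {i, v}) {v. E i v}" by (auto simp: inj_on_def doubleton_eq_iff)
    ultimately show ?thesis by (simp add: card_image degree_def)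
  qed
  moreover have "card {i \<in> UNIV. i \<in> e} = 2" if "e \<in> edges" for e
    using that assms unfolding edges_def simple_graph_def by (auto simp: card_insert_if)
  ultimately show ?thesis
    using sum_multicount[of UNIV edges "\<lambda>i e. i \<in> e" 2] by (simp add: graph_size_def edges_def)
qed

lemma inner_sqrt_deg_vec_self:
  fixes E :: "'n::finite \<Rightarrow> 'n \<Rightarrow> bool"
  assumes "simple_graph E"
  shows "sqrt_deg_vec E \<bullet> sqrt_deg_vec E = 2 * real (graph_size E)"
  using sum_degree_eq_twice_graph_size[OF assms]
  by (simp add: inner_vec_def sqrt_deg_vec_def flip: of_nat_sum)

theorem theorem4p5:
  fixes E :: "'n::finite \<Rightarrow> 'n \<Rightarrow> bool" and k :: nat
  assumes "simple_graph E" and "connected_graph E"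
    and "2 \<le> k" and "k \<le> CARD('n)"
  shows "(card (matrix_eigenvalues (norm_laplacian E)) = k \<longleftrightarrow>
          (\<exists>mu :: nat \<Rightarrow> real.
             inj_on mu {1..k-1} \<and> (\<forall>i\<in>{1..k-1}. mu i \<noteq> 0) \<and>
             (\<forall>i\<in>{1..k-1}. \<not> invertible (norm_laplacian E - mu i *\<^sub>R mat 1)) \<and>
             shifted_prod (norm_laplacian E) mu (k-1) =
               ((-1)^(k-1) * (\<Prod>i\<in>{1..k-1}. mu i) / (2 * real (graph_size E)))
                 *\<^sub>R outer (sqrt_deg_vec E)))
       \<and> (\<forall>mu :: nat \<Rightarrow> real.
             inj_on mu {1..k-1} \<and> (\<forall>i\<in>{1..k-1}. mu i \<noteq> 0) \<and>
             (\<forall>i\<in>{1..k-1}. \<not> invertible (norm_laplacian E - mu i *\<^sub>R mat 1)) \<and>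
             shifted_prod (norm_laplacian E) mu (k-1) =
               ((-1)^(k-1) * (\<Prod>i\<in>{1..k-1}. mu i) / (2 * real (graph_size E)))
                 *\<^sub>R outer (sqrt_deg_vec E)
           \<longrightarrow> matrix_eigenvalues (norm_laplacian E) = insert 0 (mu ` {1..k-1}))"
proof -
  have pos: "\<And>i. degree E i > 0"
    using degree_pos[OF assms(2)] assms(3,4) by simp
  then have "sqrt_deg_vec E \<noteq> 0"
    by (metis less_irrefl real_sqrt_gt_0_iff of_nat_0_less_iff sqrt_deg_vec_def vec_lambda_beta
        zero_index)
  from card_eigenvalues_iff_shifted_prod_eq_outer[OF norm_laplacian_symmetric[OF assms(1) pos]
      this norm_laplacian_sqrt_deg_vec[OF assms(1) pos] norm_laplacian_kernel[OF assms(1,2) pos]]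
  show ?thesis
    using assms(3) unfolding inner_sqrt_deg_vec_self[OF assms(1)] by simp
qed

end
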